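(* There exist $B_n$-invariant homogeneous polynomials $t_1(p),\dots,t_n(p)$ with $\deg t_k=2k$, forming a coordinate system on the orbit space, in which the cometric $\eta$ is constant and moreover $\eta^{ij}(t)=\delta_{i,n+1-j}$ for all $i,j=1,\dots,n$.
   Context: $n\ge2$. $B_n$ acts on $\mathbb{C}^n$ (coordinates $p_1,\dots,p_n$) by permutations and sign changes. $u_k=\sum_{1\le i_1<\dots<i_k\le n}p_{i_1}^2\cdots p_{i_k}^2$ ($k=1,\dots,n$), $u_0=1$, $u_k=0$ for $k<0$. Let $g^{ij}(u)=\frac{1}{4(n-1)}\sum_{k,l}\frac{1-\delta^{kl}}{p_kp_l}\frac{\partial u_i}{\partial p_k}\frac{\partial u_j}{\partial p_l}$ (normalized intersection form) and $\eta^{ij}(u)=\frac{\partial g^{ij}}{\partial u_{n-1}}(u)=\frac{2n-i-j}{n-1}u_{i+j-n-1}$, a flat contravariant metric on the orbit space with constant nonzero determinant. *)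

theory Defs
  imports Complex_Main "HOL-Combinatorics.Permutations"
begin

text \<open>Polynomials in the variables x_1,...,x_n with complex coefficients,
  represented by their coefficient function on exponent vectors
  (alpha i = exponent of x_i).\<close>

type_synonym mpoly = "(nat \<Rightarrow> nat) \<Rightarrow> complex"

definition is_mpoly :: "nat \<Rightarrow> mpoly \<Rightarrow> bool" where
  "is_mpoly n c \<longleftrightarrow> finite {\<alpha>. c \<alpha> \<noteq> 0} \<and>
     (\<forall>\<alpha>. c \<alpha> \<noteq> 0 \<longrightarrow> (\<forall>i. i \<notin> {1..n} \<longrightarrow> \<alpha> i = 0))"

definition meval :: "nat \<Rightarrow> mpoly \<Rightarrow> (nat \<Rightarrow> complex) \<Rightarrow> complex" where
  "meval n c x = (\<Sum>\<alpha> | c \<alpha> \<noteq> 0. c \<alpha> * (\<Prod>i\<in>{1..n}. x i ^ \<alpha> i))"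

definition mderiv :: "nat \<Rightarrow> mpoly \<Rightarrow> mpoly" where
  "mderiv i c = (\<lambda>\<alpha>. of_nat (\<alpha> i + 1) * c (\<alpha>(i := \<alpha> i + 1)))"

definition homogeneous :: "nat \<Rightarrow> nat \<Rightarrow> mpoly \<Rightarrow> bool" where
  "homogeneous n d c \<longleftrightarrow> (\<forall>\<alpha>. c \<alpha> \<noteq> 0 \<longrightarrow> (\<Sum>i\<in>{1..n}. \<alpha> i) = d)"

definition Bn_act :: "(nat \<Rightarrow> nat) \<Rightarrow> (nat \<Rightarrow> complex) \<Rightarrow> (nat \<Rightarrow> complex) \<Rightarrow> (nat \<Rightarrow> complex)" where
  "Bn_act \<sigma> \<epsilon> p = (\<lambda>i. \<epsilon> i * p (\<sigma> i))"

definition Bn_invariant :: "nat \<Rightarrow> mpoly \<Rightarrow> bool" where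
  "Bn_invariant n c \<longleftrightarrow> (\<forall>\<sigma> \<epsilon> p. \<sigma> permutes {1..n} \<longrightarrow> (\<forall>i\<in>{1..n}. \<epsilon> i = 1 \<or> \<epsilon> i = -1)
       \<longrightarrow> meval n c (Bn_act \<sigma> \<epsilon> p) = meval n c p)"

definition u_inv :: "nat \<Rightarrow> nat \<Rightarrow> (nat \<Rightarrow> complex) \<Rightarrow> complex" where
  "u_inv n k p = (\<Sum>S | S \<subseteq> {1..n} \<and> card S = k. \<Prod>i\<in>S. (p i)\<^sup>2)"

definition u_vec :: "nat \<Rightarrow> (nat \<Rightarrow> complex) \<Rightarrow> (nat \<Rightarrow> complex)" where
  "u_vec n p = (\<lambda>k. u_inv n k p)"

text \<open>The flat cometric eta^{ij}(u) = (2n-i-j)/(n-1) u_{i+j-n-1},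
  with u_0 = 1 and u_k = 0 for k < 0; y k is the value of the coordinate u_k.\<close>
definition eta :: "nat \<Rightarrow> nat \<Rightarrow> nat \<Rightarrow> (nat \<Rightarrow> complex) \<Rightarrow> complex" where
  "eta n i j y = (let k = int i + int j - int n - 1 in
     of_int (2 * int n - int i - int j) / of_nat (n - 1) *
     (if k < 0 then 0 else if k = 0 then 1 else y (nat k)))"

end

(*
  Write U(z) = 1 + u_1 z + ... + u_n z^n = prod_i (1 + p_i^2 z).  Then
  eta^{ij} = [z^(i+j-n-1)] (U - z U' / (n - 1)), and the flat coordinates are
  t_a = [z^a] U^(e_a) / e_a with e_a = (a - 1) / (n - 1) (and t_1 = u_1).
  Since dt_a/du_i = [z^(a-i)] U^(e_a - 1), the contraction of eta with the two
  Jacobians is the coefficient of z^d, d = a + b - n - 1, in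
  U^(E - 1) (U - z U' / (n - 1)) with E = e_a + e_b - 1 = d / (n - 1); by the Euler
  relation d [z^d] U^E = E [z^(d-1)] U' U^(E-1) it vanishes unless d = 0.
  The recurrence for the coefficients of U^e shows that t_a is u_a plus a polynomial
  in u_1, ..., u_(a-1) of weighted degree a; this gives the polynomial inverse and
  the degree 2a in p.  Finally t_a does not vanish at p = (1, ..., 1), where
  U = (1 + z)^n.
*)

theory Submission
  imports Defs "HOL-Computational_Algebra.Formal_Power_Series"
begin

section \<open>Polynomial functions\<close>

definition mmonom :: "nat \<Rightarrow> (nat \<Rightarrow> nat) \<Rightarrow> (nat \<Rightarrow> complex) \<Rightarrow> complex" where
  "mmonom n \<alpha> x = (\<Prod>i\<in>{1..n}. x i ^ \<alpha> i)"

lemma meval_eq_sum_mmonom: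
  assumes "finite A" "{\<alpha>. c \<alpha> \<noteq> 0} \<subseteq> A"
  shows "meval n c x = (\<Sum>\<alpha>\<in>A. c \<alpha> * mmonom n \<alpha> x)"
  unfolding meval_def mmonom_def
  by (rule sum.mono_neutral_left) (use assms in auto)

lemma meval_nonzero_imp_coeff_nonzero: "meval n c x \<noteq> 0 \<Longrightarrow> \<exists>\<alpha>. c \<alpha> \<noteq> 0"
  unfolding meval_def by (metis (mono_tags, lifting) empty_Collect_eq sum.empty)

definition mconst :: "complex \<Rightarrow> mpoly" where
  "mconst k = (\<lambda>\<alpha>. if \<alpha> = (\<lambda>_. 0) then k else 0)"

definition mvar :: "nat \<Rightarrow> mpoly" where
  "mvar i = (\<lambda>\<alpha>. if \<alpha> = (\<lambda>j. if j = i then 1 else 0) then 1 else 0)"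

definition madd :: "mpoly \<Rightarrow> mpoly \<Rightarrow> mpoly" where
  "madd p q = (\<lambda>\<alpha>. p \<alpha> + q \<alpha>)"

definition mmul :: "mpoly \<Rightarrow> mpoly \<Rightarrow> mpoly" where
  "mmul p q = (\<lambda>\<alpha>. \<Sum>(\<beta>, \<gamma>) \<in> {(\<beta>, \<gamma>). p \<beta> \<noteq> 0 \<and> q \<gamma> \<noteq> 0 \<and> (\<lambda>i. \<beta> i + \<gamma> i) = \<alpha>}.
     p \<beta> * q \<gamma>)"

lemma is_mpoly_mconst: "is_mpoly n (mconst k)"
  unfolding is_mpoly_def mconst_def by (auto intro: finite_subset[of _ "{\<lambda>_. 0}"])

lemma homogeneous_mconst: "homogeneous n 0 (mconst k)"
  unfolding homogeneous_def mconst_def by auto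

lemma meval_mconst: "meval n (mconst k) x = k"
proof -
  have "meval n (mconst k) x = (\<Sum>\<alpha>\<in>{\<lambda>_. 0}. mconst k \<alpha> * mmonom n \<alpha> x)"
    by (rule meval_eq_sum_mmonom) (auto simp: mconst_def split: if_splits)
  then show ?thesis by (simp add: mconst_def mmonom_def)
qed

lemma
  assumes "i \<in> {1..n}"
  shows is_mpoly_mvar: "is_mpoly n (mvar i)"
    and homogeneous_mvar: "homogeneous n 1 (mvar i)"
    and meval_mvar: "meval n (mvar i) x = x i"
proof -
  define e :: "nat \<Rightarrow> nat" where "e = (\<lambda>j. if j = i then 1 else 0)"
  show "is_mpoly n (mvar i)"
    unfolding is_mpoly_def mvar_def using assms by (auto intro: finite_subset[of _ "{e}"] simp: e_def)
  have "(\<Sum>j\<in>{1..n}. e j) = 1"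
    using assms by (simp add: e_def)
  then show "homogeneous n 1 (mvar i)"
    unfolding homogeneous_def mvar_def e_def by auto
  have "meval n (mvar i) x = (\<Sum>\<alpha>\<in>{e}. mvar i \<alpha> * mmonom n \<alpha> x)"
    by (rule meval_eq_sum_mmonom) (auto simp: mvar_def e_def split: if_splits)
  also have "\<dots> = mmonom n e x"
    by (simp add: mvar_def e_def)
  also have "\<dots> = (\<Prod>j\<in>{1..n}. if j = i then x i else 1)"
    unfolding mmonom_def e_def by (rule prod.cong) auto
  also have "\<dots> = x i"
    using assms by (simp add: prod.delta)
  finally show "meval n (mvar i) x = x i" .
qed

lemma
  assumes "is_mpoly n p" "is_mpoly n q"
  shows is_mpoly_madd: "is_mpoly n (madd p q)"
    and meval_madd: "meval n (madd p q) x = meval n p x + meval n q x"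
proof -
  define A where "A = {\<alpha>. p \<alpha> \<noteq> 0} \<union> {\<alpha>. q \<alpha> \<noteq> 0}"
  have A: "finite A" "{\<alpha>. madd p q \<alpha> \<noteq> 0} \<subseteq> A"
    using assms by (auto simp: A_def madd_def is_mpoly_def)
  then show "is_mpoly n (madd p q)"
    using assms by (auto simp: is_mpoly_def A_def intro: finite_subset)
  have "meval n (madd p q) x = (\<Sum>\<alpha>\<in>A. p \<alpha> * mmonom n \<alpha> x) + (\<Sum>\<alpha>\<in>A. q \<alpha> * mmonom n \<alpha> x)"
    unfolding meval_eq_sum_mmonom[OF A] by (simp add: madd_def distrib_right sum.distrib)
  also have "\<dots> = meval n p x + meval n q x"
    by (subst (1 2) meval_eq_sum_mmonom[OF A(1)]) (auto simp: A_def)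
  finally show "meval n (madd p q) x = meval n p x + meval n q x" .
qed

lemma homogeneous_madd: "homogeneous n d p \<Longrightarrow> homogeneous n d q \<Longrightarrow> homogeneous n d (madd p q)"
  unfolding homogeneous_def madd_def by (metis add.left_neutral add.right_neutral)

lemma mmul_nonzeroE:
  assumes "mmul p q \<alpha> \<noteq> 0"
  obtains \<beta> \<gamma> where "p \<beta> \<noteq> 0" "q \<gamma> \<noteq> 0" "\<alpha> = (\<lambda>i. \<beta> i + \<gamma> i)"
proof -
  obtain \<beta>\<gamma> where "\<beta>\<gamma> \<in> {(\<beta>, \<gamma>). p \<beta> \<noteq> 0 \<and> q \<gamma> \<noteq> 0 \<and> (\<lambda>i. \<beta> i + \<gamma> i) = \<alpha>}"
    using assms unfolding mmul_def by (metis (no_types, lifting) ex_in_conv sum.empty)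
  then show thesis
    using that by auto
qed

lemma homogeneous_mmul:
  "homogeneous n d p \<Longrightarrow> homogeneous n e q \<Longrightarrow> homogeneous n (d + e) (mmul p q)"
  unfolding homogeneous_def by (auto elim!: mmul_nonzeroE simp: sum.distrib)

lemma
  assumes "is_mpoly n p" "is_mpoly n q"
  shows is_mpoly_mmul: "is_mpoly n (mmul p q)"
    and meval_mmul: "meval n (mmul p q) x = meval n p x * meval n q x"
proof -
  define A where "A = {\<beta>. p \<beta> \<noteq> 0} \<times> {\<gamma>. q \<gamma> \<noteq> 0}"
  define g where "g = (\<lambda>(\<beta>, \<gamma>). \<lambda>i::nat. \<beta> i + \<gamma> i :: nat)"
  have A: "finite A"
    using assms by (simp add: is_mpoly_def A_def)
  have supp: "{\<alpha>. mmul p q \<alpha> \<noteq> 0} \<subseteq> g ` A"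
    by (auto elim!: mmul_nonzeroE simp: A_def g_def)
  show "is_mpoly n (mmul p q)"
    unfolding is_mpoly_def
    using finite_subset[OF supp finite_imageI[OF A]] assms
    by (auto elim!: mmul_nonzeroE simp: is_mpoly_def)
  have mmul_eq: "mmul p q \<alpha> = (\<Sum>\<beta>\<gamma>\<in>{\<beta>\<gamma>\<in>A. g \<beta>\<gamma> = \<alpha>}. p (fst \<beta>\<gamma>) * q (snd \<beta>\<gamma>))" for \<alpha>
    unfolding mmul_def by (rule sum.cong) (auto simp: A_def g_def)
  have "meval n (mmul p q) x = (\<Sum>\<alpha>\<in>g ` A. \<Sum>\<beta>\<gamma>\<in>{\<beta>\<gamma>\<in>A. g \<beta>\<gamma> = \<alpha>}.
      p (fst \<beta>\<gamma>) * q (snd \<beta>\<gamma>) * mmonom n (g \<beta>\<gamma>) x)"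
    unfolding meval_eq_sum_mmonom[OF finite_imageI[OF A] supp] mmul_eq sum_distrib_right
    by (intro sum.cong) auto
  also have "\<dots> = (\<Sum>(\<beta>, \<gamma>)\<in>A. (p \<beta> * mmonom n \<beta> x) * (q \<gamma> * mmonom n \<gamma> x))"
    by (subst sum.group[OF A finite_imageI[OF A]])
       (auto simp: g_def mmonom_def power_add prod.distrib intro!: sum.cong)
  also have "\<dots> = meval n p x * meval n q x"
    unfolding A_def sum_product sum.cartesian_product meval_def mmonom_def by simp
  finally show "meval n (mmul p q) x = meval n p x * meval n q x" .
qed

lemma mmonom_fun_upd:
  assumes "i \<in> {1..n}"
  shows "mmonom n \<alpha> (x(i := t)) = t ^ \<alpha> i * (\<Prod>j\<in>{1..n} - {i}. x j ^ \<alpha> j)"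
proof -
  have "mmonom n \<alpha> (x(i := t)) = t ^ \<alpha> i * (\<Prod>j\<in>{1..n} - {i}. (x(i := t)) j ^ \<alpha> j)"
    unfolding mmonom_def using assms by (simp add: prod.remove)
  also have "(\<Prod>j\<in>{1..n} - {i}. (x(i := t)) j ^ \<alpha> j) = (\<Prod>j\<in>{1..n} - {i}. x j ^ \<alpha> j)"
    by (rule prod.cong) auto
  finally show ?thesis .
qed

lemma mmonom_lower:
  assumes "i \<in> {1..n}"
  shows "mmonom n (\<alpha>(i := \<alpha> i - 1)) x = x i ^ (\<alpha> i - 1) * (\<Prod>j\<in>{1..n} - {i}. x j ^ \<alpha> j)"
proof -
  have "mmonom n (\<alpha>(i := \<alpha> i - 1)) x =
      x i ^ (\<alpha> i - 1) * (\<Prod>j\<in>{1..n} - {i}. x j ^ (\<alpha>(i := \<alpha> i - 1)) j)"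
    using mmonom_fun_upd[OF assms, of "\<alpha>(i := \<alpha> i - 1)" x "x i"] by (simp only: fun_upd_triv fun_upd_same)
  also have "(\<Prod>j\<in>{1..n} - {i}. x j ^ (\<alpha>(i := \<alpha> i - 1)) j) = (\<Prod>j\<in>{1..n} - {i}. x j ^ \<alpha> j)"
    by (rule prod.cong) auto
  finally show ?thesis .
qed

lemma inj_on_lower_index: "inj_on (\<lambda>\<alpha>::nat \<Rightarrow> nat. \<alpha>(i := \<alpha> i - 1)) {\<alpha>. \<alpha> i \<noteq> 0}"
proof (rule inj_onI)
  fix \<alpha> \<beta> :: "nat \<Rightarrow> nat"
  assume "\<alpha> \<in> {\<alpha>. \<alpha> i \<noteq> 0}" "\<beta> \<in> {\<alpha>. \<alpha> i \<noteq> 0}" "\<alpha>(i := \<alpha> i - 1) = \<beta>(i := \<beta> i - 1)"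
  then have "\<alpha> j = \<beta> j" for j
    by (cases "j = i") (auto dest: fun_cong[of _ _ j])
  then show "\<alpha> = \<beta>" ..
qed

lemma meval_mderiv_eq_sum:
  assumes c: "is_mpoly n c" and i: "i \<in> {1..n}"
  shows "meval n (mderiv i c) x = (\<Sum>\<alpha> | c \<alpha> \<noteq> 0.
    c \<alpha> * (of_nat (\<alpha> i) * x i ^ (\<alpha> i - 1) * (\<Prod>j\<in>{1..n} - {i}. x j ^ \<alpha> j)))"
proof -
  define P where "P = (\<lambda>\<alpha>. \<Prod>j\<in>{1..n} - {i}. x j ^ \<alpha> j)"
  define B where "B = {\<alpha>. c \<alpha> \<noteq> 0 \<and> \<alpha> i \<noteq> 0}"
  define lower where "lower = (\<lambda>\<alpha>::nat \<Rightarrow> nat. \<alpha>(i := \<alpha> i - 1))"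
  have S: "finite {\<alpha>. c \<alpha> \<noteq> 0}"
    using c by (simp add: is_mpoly_def)
  have inj: "inj_on lower B"
    unfolding lower_def by (rule inj_on_subset[OF inj_on_lower_index]) (auto simp: B_def)
  have supp: "{\<beta>. mderiv i c \<beta> \<noteq> 0} \<subseteq> lower ` B"
  proof
    fix \<beta> assume "\<beta> \<in> {\<beta>. mderiv i c \<beta> \<noteq> 0}"
    then have "\<beta>(i := \<beta> i + 1) \<in> B"
      by (auto simp: mderiv_def B_def)
    moreover have "\<beta> = lower (\<beta>(i := \<beta> i + 1))"
      by (simp add: lower_def)
    ultimately show "\<beta> \<in> lower ` B" by blast
  qed
  have "meval n (mderiv i c) x = (\<Sum>\<alpha>\<in>B. mderiv i c (lower \<alpha>) * mmonom n (lower \<alpha>) x)"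
    using meval_eq_sum_mmonom[OF _ supp] S sum.reindex[OF inj] by (simp add: B_def)
  also have "\<dots> = (\<Sum>\<alpha>\<in>B. c \<alpha> * (of_nat (\<alpha> i) * x i ^ (\<alpha> i - 1) * P \<alpha>))"
  proof (rule sum.cong[OF refl])
    fix \<alpha> assume "\<alpha> \<in> B"
    then have "(lower \<alpha>)(i := lower \<alpha> i + 1) = \<alpha>" "lower \<alpha> i + 1 = \<alpha> i"
      by (auto simp: lower_def B_def)
    moreover have "mmonom n (lower \<alpha>) x = x i ^ (\<alpha> i - 1) * P \<alpha>"
      unfolding lower_def P_def by (rule mmonom_lower[OF i])
    ultimately show "mderiv i c (lower \<alpha>) * mmonom n (lower \<alpha>) x =
        c \<alpha> * (of_nat (\<alpha> i) * x i ^ (\<alpha> i - 1) * P \<alpha>)"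
      unfolding mderiv_def by (metis mult.assoc mult.left_commute)
  qed
  also have "\<dots> = (\<Sum>\<alpha> | c \<alpha> \<noteq> 0. c \<alpha> * (of_nat (\<alpha> i) * x i ^ (\<alpha> i - 1) * P \<alpha>))"
    by (rule sum.mono_neutral_left) (auto simp: B_def S)
  finally show ?thesis
    by (simp add: P_def)
qed

lemma meval_mderiv:
  assumes c: "is_mpoly n c" and i: "i \<in> {1..n}"
  shows "((\<lambda>t. meval n c (x(i := t))) has_field_derivative meval n (mderiv i c) x) (at (x i))"
proof -
  define P where "P = (\<lambda>\<alpha>. \<Prod>j\<in>{1..n} - {i}. x j ^ \<alpha> j)"
  have "meval n c (x(i := t)) = (\<Sum>\<alpha> | c \<alpha> \<noteq> 0. c \<alpha> * (t ^ \<alpha> i * P \<alpha>))" for t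
    by (simp only: meval_def mmonom_fun_upd[OF i, unfolded mmonom_def] P_def)
  moreover have "((\<lambda>t. \<Sum>\<alpha> | c \<alpha> \<noteq> 0. c \<alpha> * (t ^ \<alpha> i * P \<alpha>)) has_field_derivative
      (\<Sum>\<alpha> | c \<alpha> \<noteq> 0. c \<alpha> * (of_nat (\<alpha> i) * x i ^ (\<alpha> i - 1) * P \<alpha>))) (at (x i))"
    by (intro DERIV_sum DERIV_cmult DERIV_cmult_right DERIV_cong[OF DERIV_power[OF DERIV_ident]]) simp
  ultimately show ?thesis
    by (simp add: meval_mderiv_eq_sum[OF c i] P_def)
qed

lemma meval_mderiv_unique:
  assumes "is_mpoly n c" "i \<in> {1..n}" "\<And>x. meval n c x = f x"
    and "((\<lambda>t. f (y(i := t))) has_field_derivative D) (at (y i))"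
  shows "meval n (mderiv i c) y = D"
  using DERIV_unique[OF meval_mderiv[OF assms(1,2)]] assms(3,4) by simp

definition poly_fun :: "nat \<Rightarrow> ((nat \<Rightarrow> complex) \<Rightarrow> complex) \<Rightarrow> bool" where
  "poly_fun n f \<longleftrightarrow> (\<exists>c. is_mpoly n c \<and> (\<forall>x. meval n c x = f x))"

definition hom_poly_fun :: "nat \<Rightarrow> nat \<Rightarrow> ((nat \<Rightarrow> complex) \<Rightarrow> complex) \<Rightarrow> bool" where
  "hom_poly_fun n d f \<longleftrightarrow> (\<exists>c. is_mpoly n c \<and> homogeneous n d c \<and> (\<forall>x. meval n c x = f x))"

lemma poly_fun_const: "poly_fun n (\<lambda>_. k)"
  unfolding poly_fun_def using is_mpoly_mconst meval_mconst by blast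

lemma poly_fun_var: "i \<in> {1..n} \<Longrightarrow> poly_fun n (\<lambda>x. x i)"
  unfolding poly_fun_def using is_mpoly_mvar meval_mvar by blast

lemma poly_fun_add: "poly_fun n f \<Longrightarrow> poly_fun n g \<Longrightarrow> poly_fun n (\<lambda>x. f x + g x)"
  unfolding poly_fun_def using is_mpoly_madd meval_madd by metis

lemma poly_fun_mult: "poly_fun n f \<Longrightarrow> poly_fun n g \<Longrightarrow> poly_fun n (\<lambda>x. f x * g x)"
  unfolding poly_fun_def using is_mpoly_mmul meval_mmul by metis

lemma poly_fun_diff: "poly_fun n f \<Longrightarrow> poly_fun n g \<Longrightarrow> poly_fun n (\<lambda>x. f x - g x)"
  using poly_fun_add[of n f "\<lambda>x. (-1) * g x"] poly_fun_mult[OF poly_fun_const, of n g "-1"] by simp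

lemma poly_fun_sum: "(\<And>a. a \<in> A \<Longrightarrow> poly_fun n (f a)) \<Longrightarrow> poly_fun n (\<lambda>x. \<Sum>a\<in>A. f a x)"
  by (induction A rule: infinite_finite_induct) (simp_all add: poly_fun_const poly_fun_add)

lemma poly_fun_prod: "(\<And>a. a \<in> A \<Longrightarrow> poly_fun n (f a)) \<Longrightarrow> poly_fun n (\<lambda>x. \<Prod>a\<in>A. f a x)"
  by (induction A rule: infinite_finite_induct) (simp_all add: poly_fun_const poly_fun_mult)

lemma poly_fun_power: "poly_fun n f \<Longrightarrow> poly_fun n (\<lambda>x. f x ^ k)"
  by (induction k) (simp_all add: poly_fun_const poly_fun_mult)

lemma poly_fun_compose:
  assumes "poly_fun n g" "\<And>j. j \<in> {1..n} \<Longrightarrow> poly_fun n (h j)"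
  shows "poly_fun n (\<lambda>x. g (\<lambda>j. h j x))"
proof -
  obtain c where c: "\<And>x. meval n c x = g x"
    using assms(1) unfolding poly_fun_def by blast
  have "poly_fun n (\<lambda>x. \<Sum>\<alpha> | c \<alpha> \<noteq> 0. c \<alpha> * (\<Prod>i\<in>{1..n}. h i x ^ \<alpha> i))"
    by (intro poly_fun_sum poly_fun_mult poly_fun_const poly_fun_prod poly_fun_power assms(2))
  then show ?thesis
    using c by (simp add: meval_def)
qed

lemma poly_fun_choice:
  "(\<And>k. poly_fun n (f k)) \<Longrightarrow> \<exists>c. \<forall>k. is_mpoly n (c k) \<and> (\<forall>x. meval n (c k) x = f k x)"
  unfolding poly_fun_def by (rule choice) blast

lemma hom_poly_fun_choice:
  "(\<And>k. hom_poly_fun n (d k) (f k)) \<Longrightarrow>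
    \<exists>c. \<forall>k. is_mpoly n (c k) \<and> homogeneous n (d k) (c k) \<and> (\<forall>x. meval n (c k) x = f k x)"
  unfolding hom_poly_fun_def by (rule choice) blast

lemma hom_poly_fun_zero: "hom_poly_fun n d (\<lambda>_. 0)"
  unfolding hom_poly_fun_def
  by (rule exI[of _ "\<lambda>_. 0"]) (simp add: is_mpoly_def homogeneous_def meval_def)

lemma hom_poly_fun_const: "hom_poly_fun n 0 (\<lambda>_. k)"
  unfolding hom_poly_fun_def using is_mpoly_mconst homogeneous_mconst meval_mconst by blast

lemma hom_poly_fun_var: "i \<in> {1..n} \<Longrightarrow> hom_poly_fun n 1 (\<lambda>x. x i)"
  unfolding hom_poly_fun_def using is_mpoly_mvar homogeneous_mvar meval_mvar by blast

lemma hom_poly_fun_add: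
  "hom_poly_fun n d f \<Longrightarrow> hom_poly_fun n d g \<Longrightarrow> hom_poly_fun n d (\<lambda>x. f x + g x)"
  unfolding hom_poly_fun_def using is_mpoly_madd homogeneous_madd meval_madd by metis

lemma hom_poly_fun_mult:
  "hom_poly_fun n d f \<Longrightarrow> hom_poly_fun n e g \<Longrightarrow> hom_poly_fun n (d + e) (\<lambda>x. f x * g x)"
  unfolding hom_poly_fun_def using is_mpoly_mmul homogeneous_mmul meval_mmul by metis

lemma hom_poly_fun_sum:
  "(\<And>a. a \<in> A \<Longrightarrow> hom_poly_fun n d (f a)) \<Longrightarrow> hom_poly_fun n d (\<lambda>x. \<Sum>a\<in>A. f a x)"
  by (induction A rule: infinite_finite_induct) (simp_all add: hom_poly_fun_zero hom_poly_fun_add)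

lemma hom_poly_fun_prod:
  "finite A \<Longrightarrow> (\<And>a. a \<in> A \<Longrightarrow> hom_poly_fun n d (f a)) \<Longrightarrow>
    hom_poly_fun n (d * card A) (\<lambda>x. \<Prod>a\<in>A. f a x)"
proof (induction A rule: finite_induct)
  case empty
  then show ?case by (simp add: hom_poly_fun_const)
next
  case (insert a A)
  then have "hom_poly_fun n (d + d * card A) (\<lambda>x. f a x * (\<Prod>a\<in>A. f a x))"
    by (intro hom_poly_fun_mult) auto
  then show ?case
    using insert by simp
qed

(* Forward substitution solving t a = y a + G a y when G a only depends on y 1, ..., y (a - 1). *)
primrec triangular_inv ::
  "(nat \<Rightarrow> (nat \<Rightarrow> complex) \<Rightarrow> complex) \<Rightarrow> nat \<Rightarrow> (nat \<Rightarrow> complex) \<Rightarrow> nat \<Rightarrow> complex" where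
  "triangular_inv G 0 t = (\<lambda>_. 0)"
| "triangular_inv G (Suc a) t =
    (triangular_inv G a t)(Suc a := t (Suc a) - G (Suc a) (triangular_inv G a t))"

lemma triangular_inv_stable: "j \<le> a \<Longrightarrow> a \<le> b \<Longrightarrow> triangular_inv G b t j = triangular_inv G a t j"
  by (induction b) (auto simp: le_Suc_eq)

lemma poly_fun_triangular_inv:
  assumes poly: "\<And>a. a \<in> {1..n} \<Longrightarrow> poly_fun n (G a)" and "a \<le> n"
  shows "poly_fun n (\<lambda>t. triangular_inv G a t j)"
  using assms(2)
proof (induction a arbitrary: j)
  case 0
  then show ?case
    by (simp add: poly_fun_const)
next
  case (Suc a)
  have "poly_fun n (\<lambda>t. G (Suc a) (\<lambda>i. triangular_inv G a t i))"
    by (rule poly_fun_compose) (use Suc poly in auto)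
  then have "poly_fun n (\<lambda>t. t (Suc a) - G (Suc a) (triangular_inv G a t))"
    using Suc.prems by (intro poly_fun_diff poly_fun_var) auto
  then show ?case
    using Suc by (cases "j = Suc a") simp_all
qed

lemma triangular_inv_left_inverse:
  assumes lower: "\<And>a y y'. a \<in> {1..n} \<Longrightarrow> (\<And>j. j \<in> {1..<a} \<Longrightarrow> y j = y' j) \<Longrightarrow> G a y = G a y'"
    and "a \<le> n" "j \<in> {1..a}"
  shows "triangular_inv G a (\<lambda>i. y i + G i y) j = y j"
  using assms(2,3)
proof (induction a arbitrary: j)
  case (Suc a)
  have "G (Suc a) (triangular_inv G a (\<lambda>i. y i + G i y)) = G (Suc a) y"
    using Suc by (intro lower) auto
  then show ?case
    using Suc by auto
qed simp

lemma triangular_inv_right_inverse: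
  assumes lower: "\<And>a y y'. a \<in> {1..n} \<Longrightarrow> (\<And>j. j \<in> {1..<a} \<Longrightarrow> y j = y' j) \<Longrightarrow> G a y = G a y'"
    and k: "k \<in> {1..n}"
  shows "triangular_inv G n t k + G k (triangular_inv G n t) = t k"
proof -
  obtain a where a: "k = Suc a"
    using k by (cases k) auto
  have "G k (triangular_inv G n t) = G k (triangular_inv G a t)"
    using k a by (intro lower) (auto simp: triangular_inv_stable)
  moreover have "triangular_inv G n t k = triangular_inv G k t k"
    using k by (simp add: triangular_inv_stable)
  ultimately show ?thesis
    using a by simp
qed

lemma triangular_poly_map_inverse:
  fixes F :: "nat \<Rightarrow> (nat \<Rightarrow> complex) \<Rightarrow> complex"
  assumes poly: "\<And>a. a \<in> {1..n} \<Longrightarrow> poly_fun n (F a)"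
    and triangular: "\<And>a y y'. a \<in> {1..n} \<Longrightarrow> (\<And>j. j \<in> {1..<a} \<Longrightarrow> y j = y' j) \<Longrightarrow>
      F a y - y a = F a y' - y' a"
  shows "\<exists>S. (\<forall>k. poly_fun n (S k)) \<and>
    (\<forall>y. \<forall>k\<in>{1..n}. S k (\<lambda>j. F j y) = y k) \<and> (\<forall>t. \<forall>k\<in>{1..n}. F k (\<lambda>j. S j t) = t k)"
proof -
  define G where "G = (\<lambda>a y. F a y - y a)"
  have F_eq: "F a y = y a + G a y" for a y
    by (simp add: G_def)
  have poly_G: "poly_fun n (G a)" if "a \<in> {1..n}" for a
    unfolding G_def using that by (intro poly_fun_diff poly poly_fun_var)
  have lower: "G a y = G a y'" if "a \<in> {1..n}" "\<And>j. j \<in> {1..<a} \<Longrightarrow> y j = y' j" for a y y'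
    unfolding G_def using triangular[OF that] .
  show ?thesis
    unfolding F_eq using poly_fun_triangular_inv[of n G, OF poly_G]
      triangular_inv_left_inverse[of n G, OF lower] triangular_inv_right_inverse[of n G, OF lower]
    by (intro exI[of _ "\<lambda>k t. triangular_inv G n t k"]) auto
qed

section \<open>Real powers of formal power series\<close>

notation fps_nth (infixl \<open>$$\<close> 75)

lemma one_plus_fps_X_neq_0: "(1 + fps_X :: 'a::field fps) \<noteq> 0"
proof
  assume "1 + fps_X = (0 :: 'a fps)"
  then have "(1 + fps_X :: 'a fps) $$ 0 = 0"
    by simp
  then show False
    by simp
qed

lemma fps_binomial_ode: "(1 + fps_X) * fps_deriv (fps_binomial c) = fps_const c * fps_binomial c"
  unfolding fps_binomial_deriv
  by (rule fps_times_divide_eq[THEN trans[OF mult.commute]]) (simp_all add: one_plus_fps_X_neq_0)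

definition fps_powr :: "'a::field_char_0 fps \<Rightarrow> 'a \<Rightarrow> 'a fps" where
  "fps_powr U e = fps_binomial e oo (U - 1)"

lemma fps_powr_nth_0 [simp]: "fps_powr U e $$ 0 = 1"
  by (simp add: fps_powr_def fps_compose_nth)

lemma fps_powr_add:
  "U $$ 0 = 1 \<Longrightarrow> fps_powr U (a + b) = fps_powr U a * fps_powr U b"
  unfolding fps_powr_def fps_binomial_add_mult by (rule fps_compose_mult_distrib) simp

lemma fps_powr_1: "U $$ 0 = 1 \<Longrightarrow> fps_powr U 1 = U"
  unfolding fps_powr_def fps_binomial_1 fps_compose_add_distrib fps_compose_1
  by (subst fps_X_fps_compose_startby0) simp_all

lemma fps_powr_plus_1: "U $$ 0 = 1 \<Longrightarrow> fps_powr U (e + 1) = U * fps_powr U e"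
  by (simp add: fps_powr_add fps_powr_1 mult.commute)

lemma fps_powr_ode:
  assumes U: "U $$ 0 = 1"
  shows "U * fps_deriv (fps_powr U e) = fps_const e * fps_deriv U * fps_powr U e"
proof -
  define B :: "'a fps" where "B = fps_binomial e"
  have W: "(U - 1) $$ 0 = 0"
    using U by simp
  have "(1 + fps_X) * fps_deriv B = fps_const e * B"
    unfolding B_def by (rule fps_binomial_ode)
  then have "((1 + fps_X) oo (U - 1)) * (fps_deriv B oo (U - 1)) = fps_const e * (B oo (U - 1))"
    by (metis W fps_compose_mult_distrib fps_const_compose)
  moreover have "(1 + fps_X) oo (U - 1) = U"
    using fps_powr_1[OF U] by (simp add: fps_powr_def fps_binomial_1)
  ultimately show ?thesis
    unfolding fps_powr_def fps_compose_deriv[OF W] B_def[symmetric] by (simp add: ac_simps)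
qed

lemma fps_deriv_fps_powr:
  assumes U: "U $$ 0 = 1"
  shows "fps_deriv (fps_powr U e) = fps_const e * fps_deriv U * fps_powr U (e - 1)"
proof -
  have "U * (fps_const e * fps_deriv U * fps_powr U (e - 1)) = fps_const e * fps_deriv U * fps_powr U e"
    using fps_powr_plus_1[OF U, of "e - 1"] by (simp add: ac_simps)
  also have "\<dots> = U * fps_deriv (fps_powr U e)"
    by (rule fps_powr_ode[OF U, symmetric])
  finally show ?thesis
    using U by (metis mult_left_cancel one_neq_zero fps_zero_nth)
qed

lemma fps_powr_fps_binomial: "fps_powr (fps_binomial a) e = fps_binomial (a * e)"
proof -
  define A where "A = fps_powr (fps_binomial a) e"
  have B: "fps_binomial a $$ 0 = 1"
    by simp
  have "(1 + fps_X) * fps_deriv A =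
      fps_const e * ((1 + fps_X) * fps_deriv (fps_binomial a)) * fps_powr (fps_binomial a) (e - 1)"
    unfolding A_def fps_deriv_fps_powr[OF B] by (simp add: ac_simps)
  also have "\<dots> = fps_const e * (fps_const a * fps_binomial a) * fps_powr (fps_binomial a) (e - 1)"
    by (simp only: fps_binomial_ode)
  also have "\<dots> = fps_const (a * e) * A"
    using fps_powr_plus_1[OF B, of "e - 1"] by (simp add: A_def ac_simps)
  finally have "(1 + fps_X) * fps_deriv A = fps_const (a * e) * A" .
  then have "fps_deriv A = fps_const (a * e) * A / (1 + fps_X)"
    by (metis nonzero_mult_div_cancel_left one_plus_fps_X_neq_0)
  then show ?thesis
    using fps_binomial_ODE_unique'[of A "a * e"] by (simp add: A_def)
qed

lemma fps_nth_weighted_wronskian: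
  fixes V A :: "'a::comm_ring_1 fps"
  assumes V: "V $$ 0 = 0"
  shows "(fps_const e * fps_deriv V * A - V * fps_deriv A) $$ m =
    (\<Sum>j=1..Suc m. (e * of_nat j - of_nat (Suc m - j)) * V $$ j * A $$ (Suc m - j))"
proof -
  have DV: "(fps_deriv V * A) $$ m = (\<Sum>j=1..Suc m. of_nat j * V $$ j * A $$ (Suc m - j))"
  proof -
    have "(fps_deriv V * A) $$ m = (\<Sum>i=0..m. of_nat (i + 1) * V $$ (i + 1) * A $$ (m - i))"
      by (simp add: fps_mult_nth)
    also have "\<dots> = (\<Sum>j=Suc 0..Suc m. of_nat j * V $$ j * A $$ (Suc m - j))"
      by (subst sum.shift_bounds_cl_Suc_ivl) simp
    finally show ?thesis by simp
  qed
  have DA: "(V * fps_deriv A) $$ m = (\<Sum>j=1..Suc m. of_nat (Suc m - j) * V $$ j * A $$ (Suc m - j))"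
  proof -
    have "(V * fps_deriv A) $$ m = (\<Sum>i=1..m. V $$ i * (of_nat (Suc m - i) * A $$ (Suc m - i)))"
      using V by (simp add: fps_mult_nth sum.atLeast_Suc_atMost Suc_diff_le)
    also have "\<dots> = (\<Sum>j=1..Suc m. of_nat (Suc m - j) * V $$ j * A $$ (Suc m - j))"
      by (simp add: mult.assoc mult.left_commute)
    finally show ?thesis .
  qed
  have "(fps_const e * fps_deriv V * A - V * fps_deriv A) $$ m =
      e * (fps_deriv V * A) $$ m - (V * fps_deriv A) $$ m"
    by (simp add: mult.assoc)
  also have "\<dots> = (\<Sum>j=1..Suc m. (e * of_nat j - of_nat (Suc m - j)) * V $$ j * A $$ (Suc m - j))"
    unfolding DV DA sum_distrib_left sum_subtractf[symmetric]
    by (rule sum.cong) (simp_all add: algebra_simps)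
  finally show ?thesis .
qed

lemma fps_powr_nth_recurrence:
  assumes U: "U $$ 0 = 1"
  shows "of_nat k * fps_powr U e $$ k =
    (\<Sum>j=1..k. (e * of_nat j - of_nat (k - j)) * U $$ j * fps_powr U e $$ (k - j))"
proof (cases k)
  case (Suc m)
  define A where "A = fps_powr U e"
  have "fps_const e * fps_deriv (U - 1) * A - (U - 1) * fps_deriv A = fps_deriv A"
    using fps_powr_ode[OF U, of e] by (simp add: A_def algebra_simps)
  then have "fps_deriv A $$ m = (\<Sum>j=1..k. (e * of_nat j - of_nat (k - j)) * (U - 1) $$ j * A $$ (k - j))"
    using fps_nth_weighted_wronskian[of "U - 1" e A m] U Suc by simp
  also have "\<dots> = (\<Sum>j=1..k. (e * of_nat j - of_nat (k - j)) * U $$ j * A $$ (k - j))"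
    by (intro sum.cong) auto
  finally show ?thesis
    using Suc by (simp add: A_def)
qed simp

(* H is the derivative of U^e in the direction V, and the identity is the linearisation of
   U (U^e)' = e U' U^e (fps_powr_ode). *)
lemma fps_powr_variation:
  fixes U V :: "'a::field_char_0 fps" and e :: 'a
  assumes U: "U $$ 0 = 1"
  defines "H \<equiv> fps_const e * V * fps_powr U (e - 1)"
  shows "fps_const e * fps_deriv U * H - U * fps_deriv H =
    V * fps_deriv (fps_powr U e) - fps_const e * fps_deriv V * fps_powr U e"
proof -
  define C where "C = fps_powr U (e - 2)"
  have B: "fps_powr U (e - 1) = U * C"
    using fps_powr_plus_1[OF U, of "e - 2"] by (simp add: C_def)
  have A: "fps_powr U e = U * (U * C)"
    using fps_powr_plus_1[OF U, of "e - 1"] B by simp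
  have DA: "fps_deriv (fps_powr U e) = fps_const e * fps_deriv U * (U * C)"
    using fps_deriv_fps_powr[OF U, of e] B by simp
  have DB: "fps_deriv (fps_powr U (e - 1)) = (fps_const e - 1) * fps_deriv U * C"
    using fps_deriv_fps_powr[OF U, of "e - 1"] by (simp add: C_def flip: fps_const_sub)
  show ?thesis
    unfolding H_def fps_deriv_mult fps_deriv_const DA DB unfolding A B by (simp add: algebra_simps)
qed

lemma fps_powr_variation_nth:
  fixes U V :: "'a::field_char_0 fps" and e :: 'a
  assumes U: "U $$ 0 = 1" and V: "V $$ 0 = 0"
  defines "H \<equiv> fps_const e * V * fps_powr U (e - 1)"
  shows "(\<Sum>j=1..Suc m. (e * of_nat j - of_nat (Suc m - j)) *
      (U $$ j * H $$ (Suc m - j) + V $$ j * fps_powr U e $$ (Suc m - j))) = of_nat (Suc m) * H $$ Suc m"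
proof -
  define A where "A = fps_powr U e"
  define c where "c j = e * of_nat j - of_nat (Suc m - j)" for j
  have S1: "(\<Sum>j=1..Suc m. c j * (V $$ j * A $$ (Suc m - j))) =
      (fps_const e * fps_deriv V * A - V * fps_deriv A) $$ m"
    using fps_nth_weighted_wronskian[OF V, of e A m] by (simp add: c_def mult.assoc)
  have "(\<Sum>j=1..Suc m. c j * (U $$ j * H $$ (Suc m - j))) =
      (\<Sum>j=1..Suc m. c j * ((U - 1) $$ j * H $$ (Suc m - j)))"
    by (intro sum.cong) auto
  also have "\<dots> = (fps_const e * fps_deriv U * H - U * fps_deriv H + fps_deriv H) $$ m"
    using fps_nth_weighted_wronskian[of "U - 1" e H m] U by (simp add: c_def mult.assoc algebra_simps)
  also have "\<dots> = (V * fps_deriv A - fps_const e * fps_deriv V * A + fps_deriv H) $$ m"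
    unfolding H_def fps_powr_variation[OF U] A_def ..
  finally have S2: "(\<Sum>j=1..Suc m. c j * (U $$ j * H $$ (Suc m - j))) =
      (V * fps_deriv A - fps_const e * fps_deriv V * A + fps_deriv H) $$ m" .
  show ?thesis
    unfolding c_def[symmetric] A_def[symmetric] distrib_left sum.distrib S1 S2 by simp
qed

(* Induction along the coefficient recurrence: by fps_powr_variation_nth the claimed
   derivative satisfies the differentiated recurrence. *)
lemma has_field_derivative_fps_powr_nth:
  fixes U :: "complex \<Rightarrow> complex fps"
  assumes U: "\<And>t. U t $$ 0 = 1"
    and dU: "\<And>j. ((\<lambda>t. U t $$ j) has_field_derivative V $$ j) (at s)"
  shows "((\<lambda>t. fps_powr (U t) e $$ k) has_field_derivative
           (fps_const e * V * fps_powr (U s) (e - 1)) $$ k) (at s)"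
proof (induction k rule: less_induct)
  case (less k)
  define A where "A = fps_powr (U s) e"
  define H where "H = fps_const e * V * fps_powr (U s) (e - 1)"
  define c where "c j = e * of_nat j - of_nat (k - j)" for j
  have V: "V $$ 0 = 0"
    using DERIV_unique[OF dU[of 0]] U by simp
  show ?case
  proof (cases k)
    case 0
    then show ?thesis
      using V by (simp add: fps_mult_nth)
  next
    case (Suc m)
    have rec: "fps_powr (U t) e $$ k =
        (\<Sum>j=1..k. c j * (U t $$ j * fps_powr (U t) e $$ (k - j))) / of_nat k" for t
    proof -
      have "of_nat k * fps_powr (U t) e $$ k = (\<Sum>j=1..k. c j * (U t $$ j * fps_powr (U t) e $$ (k - j)))"
        unfolding fps_powr_nth_recurrence[OF U] c_def by (simp add: mult.assoc)
      then show ?thesis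
        using Suc by (simp add: eq_divide_eq mult.commute del: of_nat_Suc)
    qed
    have deriv: "((\<lambda>t. \<Sum>j=1..k. c j * (U t $$ j * fps_powr (U t) e $$ (k - j))) has_field_derivative
        (\<Sum>j=1..k. c j * (U s $$ j * H $$ (k - j) + V $$ j * A $$ (k - j)))) (at s)"
      unfolding A_def H_def by (intro DERIV_sum DERIV_cmult DERIV_mult' dU less) auto
    moreover have "(\<Sum>j=1..k. c j * (U s $$ j * H $$ (k - j) + V $$ j * A $$ (k - j))) = of_nat k * H $$ k"
      using fps_powr_variation_nth[OF U V, of e m] unfolding c_def A_def H_def Suc .
    ultimately have "((\<lambda>t. fps_powr (U t) e $$ k) has_field_derivative of_nat k * H $$ k / of_nat k) (at s)"
      unfolding rec by (simp only: DERIV_cdivide)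
    then show ?thesis
      using Suc by (simp add: H_def del: of_nat_Suc)
  qed
qed

lemma fps_powr_nth_minus_lead:
  assumes U: "U $$ 0 = 1"
  shows "of_nat (Suc m) * (fps_powr U e $$ Suc m - e * U $$ Suc m) =
    (\<Sum>j=1..m. (e * of_nat j - of_nat (Suc m - j)) * U $$ j * fps_powr U e $$ (Suc m - j))"
proof -
  have "of_nat (Suc m) * fps_powr U e $$ Suc m =
      (\<Sum>j=1..m. (e * of_nat j - of_nat (Suc m - j)) * U $$ j * fps_powr U e $$ (Suc m - j)) +
      e * of_nat (Suc m) * U $$ Suc m"
    unfolding fps_powr_nth_recurrence[OF U] by simp
  then show ?thesis
    by (simp add: algebra_simps)
qed

lemma fps_powr_nth_minus_lead_cong:
  fixes U U' :: "'a::field_char_0 fps"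
  assumes U: "U $$ 0 = 1" and U': "U' $$ 0 = 1"
    and low: "\<And>j. 0 < j \<Longrightarrow> j < k \<Longrightarrow> U $$ j = U' $$ j"
  shows "fps_powr U e $$ k - e * U $$ k = fps_powr U' e $$ k - e * U' $$ k"
  using low
proof (induction k rule: less_induct)
  case (less k)
  show ?case
  proof (cases k)
    case 0
    then show ?thesis
      using U U' by simp
  next
    case (Suc m)
    have "(\<Sum>j=1..m. (e * of_nat j - of_nat (Suc m - j)) * U $$ j * fps_powr U e $$ (Suc m - j)) =
        (\<Sum>j=1..m. (e * of_nat j - of_nat (Suc m - j)) * U' $$ j * fps_powr U' e $$ (Suc m - j))"
    proof (rule sum.cong[OF refl])
      fix j assume j: "j \<in> {1..m}"
      have "fps_powr U e $$ (k - j) - e * U $$ (k - j) = fps_powr U' e $$ (k - j) - e * U' $$ (k - j)"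
        using j Suc by (intro less.IH) (auto intro: less.prems)
      moreover have "U $$ (k - j) = U' $$ (k - j)" "U $$ j = U' $$ j"
        using j Suc by (auto intro: less.prems)
      ultimately show "(e * of_nat j - of_nat (Suc m - j)) * U $$ j * fps_powr U e $$ (Suc m - j) =
          (e * of_nat j - of_nat (Suc m - j)) * U' $$ j * fps_powr U' e $$ (Suc m - j)"
        using Suc by simp
    qed
    then have "of_nat (Suc m) * (fps_powr U e $$ Suc m - e * U $$ Suc m) =
        of_nat (Suc m) * (fps_powr U' e $$ Suc m - e * U' $$ Suc m)"
      unfolding fps_powr_nth_minus_lead[OF U] fps_powr_nth_minus_lead[OF U'] .
    then show ?thesis
      unfolding Suc by (simp only: mult_left_cancel[OF of_nat_neq_0])
  qed
qed

lemma fps_powr_euler_nth: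
  fixes U :: "'a::field_char_0 fps"
  assumes U: "U $$ 0 = 1" and N: "N \<noteq> 0"
  shows "(fps_powr U (of_nat d / N - 1) * (U - fps_const (1 / N) * fps_X * fps_deriv U)) $$ d =
    (if d = 0 then 1 else 0)"
proof -
  define E where "E = of_nat d / N"
  define P where "P = fps_powr U (E - 1)"
  have split: "P * (U - fps_const (1 / N) * fps_X * fps_deriv U) =
      fps_powr U E - fps_X * (fps_const (1 / N) * (fps_deriv U * P))"
    using fps_powr_plus_1[OF U, of "E - 1"] by (simp add: P_def algebra_simps)
  show ?thesis
  proof (cases d)
    case (Suc m)
    have "of_nat d * fps_powr U E $$ d = E * (fps_deriv U * P) $$ m"
      using arg_cong[OF fps_deriv_fps_powr[OF U, of E], of "\<lambda>f. f $$ m"] Suc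
      by (simp add: P_def mult.assoc)
    then have "(fps_deriv U * P) $$ m = N * fps_powr U E $$ d"
      using N Suc by (simp add: E_def field_simps del: of_nat_Suc)
    then show ?thesis
      unfolding E_def[symmetric] P_def[symmetric] split using N Suc by (simp add: fps_X_mult_nth)
  qed (simp add: E_def P_def split U)
qed

lemma sum_fps_X_power_mult_nth:
  fixes P G :: "'a::comm_semiring_1 fps"
  assumes a: "a \<le> n" and c: "c < m"
  shows "(\<Sum>i=1..n. (fps_X ^ i * P) $$ a * (fps_X ^ m * G) $$ (i + c)) = (fps_X ^ m * (P * G)) $$ (a + c)"
proof (cases "m \<le> a + c")
  case True
  define d where "d = a + c - m"
  have "(\<Sum>i=1..n. (fps_X ^ i * P) $$ a * (fps_X ^ m * G) $$ (i + c)) =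
      (\<Sum>i=m-c..a. P $$ (a - i) * G $$ (i + c - m))"
    by (rule sum.mono_neutral_cong_right) (use a c in \<open>auto simp: fps_X_power_mult_nth\<close>)
  also have "\<dots> = (\<Sum>k=0..d. P $$ k * G $$ (d - k))"
    by (rule sum.reindex_bij_witness[of _ "\<lambda>k. a - k" "\<lambda>i. a - i"])
      (use True c in \<open>auto simp: d_def add.commute\<close>)
  also have "\<dots> = (fps_X ^ m * (P * G)) $$ (a + c)"
    unfolding fps_X_power_mult_nth using True by (simp add: fps_mult_nth d_def)
  finally show ?thesis .
qed (auto simp: fps_X_power_mult_nth intro!: sum.neutral)

section \<open>The generating polynomial of the basic invariants\<close>

(* For y = u_vec n p this is the product of the factors 1 + p_i^2 z. *)
definition u_fps :: "nat \<Rightarrow> (nat \<Rightarrow> complex) \<Rightarrow> complex fps" where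
  "u_fps n y = Abs_fps (\<lambda>j. if j = 0 then 1 else if j \<le> n then y j else 0)"

lemma u_fps_nth: "u_fps n y $$ j = (if j = 0 then 1 else if j \<le> n then y j else 0)"
  by (simp add: u_fps_def)

lemma has_field_derivative_u_fps_nth:
  assumes "i \<in> {1..n}"
  shows "((\<lambda>t. u_fps n (y(i := t)) $$ j) has_field_derivative fps_X ^ i $$ j) (at (y i))"
proof (cases "j = i")
  case True
  then have "(\<lambda>t. u_fps n (y(i := t)) $$ j) = (\<lambda>t. t)"
    using assms by (auto simp: u_fps_nth)
  then show ?thesis
    using True by simp
next
  case False
  then have "(\<lambda>t. u_fps n (y(i := t)) $$ j) = (\<lambda>t. u_fps n y $$ j)"
    using assms by (auto simp: u_fps_nth)
  then show ?thesis
    using False by simp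
qed

lemma has_field_derivative_fps_powr_u_fps_nth:
  assumes "i \<in> {1..n}"
  shows "((\<lambda>t. fps_powr (u_fps n (y(i := t))) e $$ k) has_field_derivative
           (fps_const e * fps_X ^ i * fps_powr (u_fps n y) (e - 1)) $$ k) (at (y i))"
  using has_field_derivative_fps_powr_nth[of "\<lambda>t. u_fps n (y(i := t))" "fps_X ^ i" "y i" e k]
    has_field_derivative_u_fps_nth[OF assms]
  by (simp add: u_fps_nth)

(* y j gets weight j, half the degree of u_j in p. *)
inductive weighted_poly_fun :: "nat \<Rightarrow> nat \<Rightarrow> ((nat \<Rightarrow> complex) \<Rightarrow> complex) \<Rightarrow> bool" for n where
  weighted_const: "weighted_poly_fun n 0 (\<lambda>_. c)"
| weighted_zero: "weighted_poly_fun n d (\<lambda>_. 0)"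
| weighted_var: "j \<in> {1..n} \<Longrightarrow> weighted_poly_fun n j (\<lambda>y. y j)"
| weighted_add: "weighted_poly_fun n d f \<Longrightarrow> weighted_poly_fun n d g \<Longrightarrow>
    weighted_poly_fun n d (\<lambda>y. f y + g y)"
| weighted_mult: "weighted_poly_fun n d f \<Longrightarrow> weighted_poly_fun n d' g \<Longrightarrow>
    weighted_poly_fun n (d + d') (\<lambda>y. f y * g y)"

lemma weighted_poly_fun_imp_poly_fun: "weighted_poly_fun n d f \<Longrightarrow> poly_fun n f"
  by (induction rule: weighted_poly_fun.induct)
    (auto intro: poly_fun_const poly_fun_var poly_fun_add poly_fun_mult)

lemma weighted_poly_fun_sum:
  "(\<And>a. a \<in> A \<Longrightarrow> weighted_poly_fun n d (f a)) \<Longrightarrow> weighted_poly_fun n d (\<lambda>y. \<Sum>a\<in>A. f a y)"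
  by (induction A rule: infinite_finite_induct) (simp_all add: weighted_zero weighted_add)

lemma hom_poly_fun_u_inv: "hom_poly_fun n (2 * k) (u_inv n k)"
  unfolding u_inv_def
proof (rule hom_poly_fun_sum)
  fix S assume S: "S \<in> {S. S \<subseteq> {1..n} \<and> card S = k}"
  have square: "hom_poly_fun n 2 (\<lambda>x. x i * x i)" if "i \<in> {1..n}" for i
    using hom_poly_fun_mult[OF hom_poly_fun_var[OF that] hom_poly_fun_var[OF that]]
    by (simp only: one_add_one)
  have "hom_poly_fun n (2 * card S) (\<lambda>x. \<Prod>i\<in>S. x i * x i)"
    using S finite_subset[of S "{1..n}"] by (intro hom_poly_fun_prod square) auto
  then show "hom_poly_fun n (2 * k) (\<lambda>x. \<Prod>i\<in>S. (x i)\<^sup>2)"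
    using S by (simp add: power2_eq_square)
qed

lemma weighted_poly_fun_comp_u_vec:
  "weighted_poly_fun n d f \<Longrightarrow> hom_poly_fun n (2 * d) (\<lambda>p. f (u_vec n p))"
proof (induction rule: weighted_poly_fun.induct)
  case (weighted_var j)
  then show ?case
    using hom_poly_fun_u_inv[of n j] by (simp add: u_vec_def)
next
  case (weighted_mult d f d' g)
  then show ?case
    using hom_poly_fun_mult[of n "2 * d" _ "2 * d'"] by (simp add: distrib_left)
qed (simp_all add: hom_poly_fun_const hom_poly_fun_zero hom_poly_fun_add)

lemma weighted_poly_fun_u_fps_nth: "weighted_poly_fun n j (\<lambda>y. u_fps n y $$ j)"
  by (cases "j = 0"; cases "j \<le> n") (auto simp: u_fps_nth intro: weighted_const weighted_zero weighted_var)

lemma weighted_poly_fun_fps_powr_nth: "weighted_poly_fun n k (\<lambda>y. fps_powr (u_fps n y) e $$ k)"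
proof (induction k rule: less_induct)
  case (less k)
  show ?case
  proof (cases "k = 0")
    case True
    then show ?thesis
      using weighted_const by simp
  next
    case False
    define summand where "summand j y =
      (e * of_nat j - of_nat (k - j)) * (u_fps n y $$ j * fps_powr (u_fps n y) e $$ (k - j))" for j y
    have "weighted_poly_fun n k (summand j)" if "j \<in> {1..k}" for j
    proof -
      have "weighted_poly_fun n (0 + (j + (k - j))) (summand j)"
        unfolding summand_def using that
        by (intro weighted_mult weighted_const weighted_poly_fun_u_fps_nth less.IH) auto
      then show ?thesis
        using that by simp
    qed
    then have "weighted_poly_fun n (0 + k) (\<lambda>y. 1 / of_nat k * (\<Sum>j=1..k. summand j y))"
      by (intro weighted_mult weighted_const weighted_poly_fun_sum)
    moreover have "fps_powr (u_fps n y) e $$ k = 1 / of_nat k * (\<Sum>j=1..k. summand j y)" for y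
      using fps_powr_nth_recurrence[of "u_fps n y" k e] False
      by (simp add: summand_def u_fps_nth field_simps mult.assoc)
    ultimately show ?thesis
      by simp
  qed
qed

lemma u_inv_Bn_act:
  assumes \<sigma>: "\<sigma> permutes {1..n}" and \<epsilon>: "\<forall>i\<in>{1..n}. \<epsilon> i = 1 \<or> \<epsilon> i = -1"
  shows "u_inv n k (Bn_act \<sigma> \<epsilon> p) = u_inv n k p"
proof -
  define F where "F = {S. S \<subseteq> {1..n} \<and> card S = k}"
  have image_F: "\<tau> ` S \<in> F" if "\<tau> permutes {1..n}" "S \<in> F" for \<tau> S
    using that permutes_image[OF that(1)] permutes_inj[OF that(1)]
    by (auto simp: F_def card_image inj_on_subset)
  have sign: "(\<epsilon> i * z)\<^sup>2 = z\<^sup>2" if "i \<in> {1..n}" for i z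
  proof -
    have "\<epsilon> i = 1 \<or> \<epsilon> i = -1"
      using \<epsilon> that by blast
    then show ?thesis
      by (auto simp: power_mult_distrib)
  qed
  have "u_inv n k (Bn_act \<sigma> \<epsilon> p) = (\<Sum>S\<in>F. \<Prod>i\<in>S. (p (\<sigma> i))\<^sup>2)"
    unfolding u_inv_def F_def[symmetric] Bn_act_def
    by (intro sum.cong refl prod.cong) (auto simp: F_def intro!: sign)
  also have "\<dots> = (\<Sum>S\<in>F. \<Prod>i\<in>S. (p i)\<^sup>2)"
  proof (rule sum.reindex_bij_witness[of _ "\<lambda>S. inv \<sigma> ` S" "\<lambda>S. \<sigma> ` S"])
    fix S assume "S \<in> F"
    then show "inv \<sigma> ` \<sigma> ` S = S" "\<sigma> ` inv \<sigma> ` S = S" "\<sigma> ` S \<in> F" "inv \<sigma> ` S \<in> F"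
      using image_F[OF \<sigma>] image_F[OF permutes_inv[OF \<sigma>]]
      by (simp_all add: image_image permutes_inverses[OF \<sigma>])
    show "(\<Prod>i\<in>\<sigma> ` S. (p i)\<^sup>2) = (\<Prod>i\<in>S. (p (\<sigma> i))\<^sup>2)"
      using permutes_inj[OF \<sigma>] by (simp add: prod.reindex inj_on_subset)
  qed
  finally show ?thesis
    by (simp add: u_inv_def F_def)
qed

lemma Bn_invariant_comp_u_vec:
  assumes "\<And>p. meval n c p = f (u_vec n p)"
  shows "Bn_invariant n c"
  unfolding Bn_invariant_def assms by (simp add: u_vec_def u_inv_Bn_act)

lemma u_fps_u_vec_ones: "u_fps n (u_vec n (\<lambda>_. 1)) = fps_binomial (of_nat n)"
proof (rule fps_ext)
  fix j
  have "u_inv n j (\<lambda>_. 1) = of_nat (n choose j)"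
    by (simp add: u_inv_def n_subsets)
  then show "u_fps n (u_vec n (\<lambda>_. 1)) $$ j = fps_binomial (of_nat n) $$ j"
    by (simp add: u_fps_nth u_vec_def binomial_gbinomial[symmetric] binomial_eq_0)
qed

section \<open>Flat coordinates\<close>

definition flat_exp :: "nat \<Rightarrow> nat \<Rightarrow> complex" where
  "flat_exp n a = (of_nat a - 1) / (of_nat n - 1)"

(* For a = 1 the exponent vanishes; y 1 is the limit of the general formula as e tends to 0. *)
definition flat_coord :: "nat \<Rightarrow> nat \<Rightarrow> (nat \<Rightarrow> complex) \<Rightarrow> complex" where
  "flat_coord n a y =
    (if a = 1 then y 1 else fps_powr (u_fps n y) (flat_exp n a) $$ a / flat_exp n a)"

lemma flat_exp_nonzero: "n \<ge> 2 \<Longrightarrow> a \<ge> 2 \<Longrightarrow> flat_exp n a \<noteq> 0"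
  by (auto simp: flat_exp_def of_nat_diff[symmetric] simp del: of_nat_diff)

lemma weighted_poly_fun_flat_coord: "n \<ge> 1 \<Longrightarrow> weighted_poly_fun n a (flat_coord n a)"
proof (cases "a = 1")
  case False
  have "weighted_poly_fun n (0 + a) (\<lambda>y. inverse (flat_exp n a) * fps_powr (u_fps n y) (flat_exp n a) $$ a)"
    by (intro weighted_mult weighted_const weighted_poly_fun_fps_powr_nth)
  then show ?thesis
    using False by (simp add: flat_coord_def[abs_def] field_simps)
qed (auto simp: flat_coord_def[abs_def] intro: weighted_var)

lemma poly_fun_flat_coord: "n \<ge> 1 \<Longrightarrow> poly_fun n (flat_coord n a)"
  by (rule weighted_poly_fun_imp_poly_fun[OF weighted_poly_fun_flat_coord])

lemma hom_poly_fun_flat_coord_u_vec: "n \<ge> 1 \<Longrightarrow> hom_poly_fun n (2 * a) (\<lambda>p. flat_coord n a (u_vec n p))"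
  by (rule weighted_poly_fun_comp_u_vec[OF weighted_poly_fun_flat_coord])

lemma flat_coord_minus_coord_cong:
  assumes n: "n \<ge> 2" and a: "a \<in> {1..n}" and low: "\<And>j. j \<in> {1..<a} \<Longrightarrow> y j = y' j"
  shows "flat_coord n a y - y a = flat_coord n a y' - y' a"
proof (cases "a = 1")
  case False
  define e where "e = flat_exp n a"
  have e: "e \<noteq> 0"
    using False a n by (simp add: e_def flat_exp_nonzero)
  have "fps_powr (u_fps n y) e $$ a - e * y a = fps_powr (u_fps n y') e $$ a - e * y' a"
    using fps_powr_nth_minus_lead_cong[of "u_fps n y" "u_fps n y'" a e] a low by (auto simp: u_fps_nth)
  then show ?thesis
    using False e by (simp add: flat_coord_def e_def[symmetric] field_simps)
qed (simp add: flat_coord_def)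

lemma has_field_derivative_flat_coord:
  assumes n: "n \<ge> 2" and a: "a \<in> {1..n}" and i: "i \<in> {1..n}"
  shows "((\<lambda>t. flat_coord n a (y(i := t))) has_field_derivative
    (fps_X ^ i * fps_powr (u_fps n y) (flat_exp n a - 1)) $$ a) (at (y i))"
proof (cases "a = 1")
  case True
  then show ?thesis
    using i by (cases "i = 1") (auto simp: flat_coord_def fps_X_power_mult_nth)
next
  case False
  define e where "e = flat_exp n a"
  have e: "e \<noteq> 0"
    using False a n by (simp add: e_def flat_exp_nonzero)
  have "((\<lambda>t. fps_powr (u_fps n (y(i := t))) e $$ a / e) has_field_derivative
      (fps_const e * fps_X ^ i * fps_powr (u_fps n y) (e - 1)) $$ a / e) (at (y i))"
    by (intro DERIV_cdivide has_field_derivative_fps_powr_u_fps_nth i)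
  then show ?thesis
    using False e by (simp add: flat_coord_def e_def[symmetric] mult.assoc)
qed

definition eta_fps :: "nat \<Rightarrow> (nat \<Rightarrow> complex) \<Rightarrow> complex fps" where
  "eta_fps n y = u_fps n y - fps_const (1 / (of_nat n - 1)) * fps_X * fps_deriv (u_fps n y)"

lemma eta_fps_nth: "eta_fps n y $$ m = (1 - of_nat m / (of_nat n - 1)) * u_fps n y $$ m"
proof -
  have "(fps_X * fps_deriv (u_fps n y)) $$ m = of_nat m * u_fps n y $$ m"
    by (cases m) simp_all
  then show ?thesis
    by (simp add: eta_fps_def mult.assoc algebra_simps)
qed

lemma eta_eq_eta_fps_nth:
  assumes n: "n \<ge> 2" and i: "i \<in> {1..n}" and j: "j \<in> {1..n}"
  shows "eta n i j y = (fps_X ^ (n + 1) * eta_fps n y) $$ (i + j)"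
proof (cases "n + 1 \<le> i + j")
  case True
  define m where "m = i + j - (n + 1)"
  have m: "m < n" "int i + int j - int n - 1 = int m" "2 * int n - int i - int j = int n - 1 - int m"
    using i j True by (auto simp: m_def)
  have n1: "(of_nat n - 1 :: complex) \<noteq> 0" "of_nat (n - 1) = (of_nat n - 1 :: complex)"
    using n by (auto simp: of_nat_diff)
  have "eta n i j y = (of_nat n - 1 - of_nat m) / (of_nat n - 1) * (if m = 0 then 1 else y m)"
    unfolding eta_def Let_def m(2,3) n1(2) by simp
  also have "\<dots> = (1 - of_nat m / (of_nat n - 1)) * u_fps n y $$ m"
    using m(1) n1(1) by (simp add: u_fps_nth diff_divide_distrib)
  also have "\<dots> = (fps_X ^ (n + 1) * eta_fps n y) $$ (i + j)"
    using True unfolding fps_X_power_mult_nth m_def[symmetric] by (simp add: eta_fps_nth)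
  finally show ?thesis .
next
  case False
  then show ?thesis
    unfolding fps_X_power_mult_nth by (simp add: eta_def Let_def)
qed

lemma cometric_contraction_eq_nth:
  assumes n: "n \<ge> 2" and a: "a \<in> {1..n}" and b: "b \<in> {1..n}"
  shows "(\<Sum>i=1..n. \<Sum>j=1..n. (fps_X ^ i * P) $$ a * (fps_X ^ j * Q) $$ b * eta n i j y) =
    (fps_X ^ (n + 1) * (P * (Q * eta_fps n y))) $$ (a + b)"
proof -
  have inner: "(\<Sum>j=1..n. (fps_X ^ j * Q) $$ b * eta n i j y) =
      (fps_X ^ (n + 1) * (Q * eta_fps n y)) $$ (i + b)" if i: "i \<in> {1..n}" for i
  proof -
    have "(\<Sum>j=1..n. (fps_X ^ j * Q) $$ b * eta n i j y) =
        (\<Sum>j=1..n. (fps_X ^ j * Q) $$ b * (fps_X ^ (n + 1) * eta_fps n y) $$ (j + i))"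
      using i by (intro sum.cong) (simp_all add: eta_eq_eta_fps_nth[OF n] add.commute)
    also have "\<dots> = (fps_X ^ (n + 1) * (Q * eta_fps n y)) $$ (i + b)"
      using b i by (subst sum_fps_X_power_mult_nth) (auto simp: add.commute)
    finally show ?thesis .
  qed
  have "(\<Sum>i=1..n. \<Sum>j=1..n. (fps_X ^ i * P) $$ a * (fps_X ^ j * Q) $$ b * eta n i j y) =
      (\<Sum>i=1..n. (fps_X ^ i * P) $$ a * (fps_X ^ (n + 1) * (Q * eta_fps n y)) $$ (i + b))"
    unfolding mult.assoc sum_distrib_left[symmetric] by (rule sum.cong[OF refl]) (simp only: inner)
  also have "\<dots> = (fps_X ^ (n + 1) * (P * (Q * eta_fps n y))) $$ (a + b)"
    using a b by (subst sum_fps_X_power_mult_nth) auto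
  finally show ?thesis .
qed

lemma flat_coord_cometric:
  assumes n: "n \<ge> 2" and a: "a \<in> {1..n}" and b: "b \<in> {1..n}"
  shows "(\<Sum>i=1..n. \<Sum>j=1..n.
      (fps_X ^ i * fps_powr (u_fps n y) (flat_exp n a - 1)) $$ a *
      (fps_X ^ j * fps_powr (u_fps n y) (flat_exp n b - 1)) $$ b * eta n i j y) =
    (if a + b = n + 1 then 1 else 0)"
proof -
  define U where "U = u_fps n y"
  define P where "P = fps_powr U (flat_exp n a - 1) * (fps_powr U (flat_exp n b - 1) * eta_fps n y)"
  have "(fps_X ^ (n + 1) * P) $$ (a + b) = (if a + b = n + 1 then 1 else 0)"
  proof (cases "n + 1 \<le> a + b")
    case True
    define d where "d = a + b - (n + 1)"
    define N where "N = (of_nat n - 1 :: complex)"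
    have U: "U $$ 0 = 1"
      by (simp add: U_def u_fps_nth)
    have N: "N \<noteq> 0"
      using n by (simp add: N_def of_nat_diff[symmetric] del: of_nat_diff)
    have d: "(of_nat d :: complex) = (of_nat a - 1) + (of_nat b - 1) - N"
      using True by (simp add: d_def N_def of_nat_diff)
    have exponent: "flat_exp n a - 1 + (flat_exp n b - 1) = of_nat d / N - 1"
      unfolding flat_exp_def N_def[symmetric] d using N by (simp add: field_simps)
    have "eta_fps n y = U - fps_const (1 / N) * fps_X * fps_deriv U"
      by (simp add: eta_fps_def U_def N_def)
    then have "P = fps_powr U (of_nat d / N - 1) * (U - fps_const (1 / N) * fps_X * fps_deriv U)"
      unfolding P_def mult.assoc[symmetric] fps_powr_add[OF U, symmetric] exponent by simp
    then have "P $$ d = (if d = 0 then 1 else 0)"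
      using fps_powr_euler_nth[OF U N] by simp
    then show ?thesis
      using True unfolding fps_X_power_mult_nth by (auto simp: d_def)
  next
    case False
    then show ?thesis
      unfolding fps_X_power_mult_nth by auto
  qed
  then show ?thesis
    unfolding cometric_contraction_eq_nth[OF n a b] P_def U_def .
qed

lemma mderiv_flat_coord_cometric:
  assumes n: "n \<ge> 2" and T: "\<And>k. is_mpoly n (T k)" "\<And>k y. meval n (T k) y = flat_coord n k y"
    and a: "a \<in> {1..n}" and b: "b \<in> {1..n}"
  shows "(\<Sum>i\<in>{1..n}. \<Sum>j\<in>{1..n}.
      meval n (mderiv i (T a)) y * meval n (mderiv j (T b)) y * eta n i j y) =
    (if a + b = n + 1 then 1 else 0)"
proof -
  have "meval n (mderiv i (T c)) y = (fps_X ^ i * fps_powr (u_fps n y) (flat_exp n c - 1)) $$ c"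
    if "c \<in> {1..n}" "i \<in> {1..n}" for c i
    by (rule meval_mderiv_unique[OF T(1) that(2) T(2) has_field_derivative_flat_coord[OF n that]])
  then show ?thesis
    unfolding flat_coord_cometric[OF n a b, of y, symmetric] using a b by (intro sum.cong refl) simp
qed

lemma flat_coord_u_vec_ones_nonzero:
  assumes n: "n \<ge> 2" and k: "k \<in> {1..n}"
  shows "flat_coord n k (u_vec n (\<lambda>_. 1)) \<noteq> 0"
proof (cases "k = 1")
  case True
  then show ?thesis
    using n by (simp add: flat_coord_def u_vec_def u_inv_def n_subsets)
next
  case False
  define e where "e = flat_exp n k"
  have k2: "k \<ge> 2"
    using False k by auto
  have e: "e \<noteq> 0"
    using n k2 by (simp add: e_def flat_exp_nonzero)
  have "of_nat n * e \<noteq> of_nat i" if "i < k" for i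
  proof
    assume "of_nat n * e = of_nat i"
    then have "of_nat (n * (k - 1)) = (of_nat (i * (n - 1)) :: complex)"
      using n k2 by (simp add: e_def flat_exp_def of_nat_diff field_simps)
    then have "n * (k - 1) = i * (n - 1)"
      using of_nat_eq_iff by blast
    moreover have "i * (n - 1) \<le> (k - 1) * (n - 1)"
      using that by (intro mult_le_mono1) linarith
    moreover have "(k - 1) * (n - 1) < (k - 1) * n"
      using n k2 by simp
    ultimately show False
      by (simp add: mult.commute)
  qed
  then have "(\<Prod>i = 0..<k. of_nat n * e - of_nat i) \<noteq> 0"
    by simp
  then have "(of_nat n * e gchoose k) \<noteq> 0"
    by (metis gbinomial_mult_fact mult_zero_right)
  then show ?thesis
    using False e by (simp add: flat_coord_def u_fps_u_vec_ones fps_powr_fps_binomial e_def[symmetric])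
qed

theorem mainTheorem13:
  fixes n :: nat
  assumes "n \<ge> 2"
  shows "\<exists>(t :: nat \<Rightarrow> mpoly) (T :: nat \<Rightarrow> mpoly) (S :: nat \<Rightarrow> mpoly).
    (\<forall>k\<in>{1..n}.
        is_mpoly n (t k) \<and> (\<exists>\<alpha>. t k \<alpha> \<noteq> 0) \<and> homogeneous n (2 * k) (t k) \<and>
        Bn_invariant n (t k) \<and> is_mpoly n (T k) \<and> is_mpoly n (S k) \<and>
        (\<forall>p. meval n (t k) p = meval n (T k) (u_vec n p))) \<and>
    (\<forall>y. \<forall>k\<in>{1..n}. meval n (S k) (\<lambda>j. meval n (T j) y) = y k) \<and>
    (\<forall>y. \<forall>k\<in>{1..n}. meval n (T k) (\<lambda>j. meval n (S j) y) = y k) \<and>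
    (\<forall>y. \<forall>a\<in>{1..n}. \<forall>b\<in>{1..n}.
        (\<Sum>i\<in>{1..n}. \<Sum>j\<in>{1..n}.
           meval n (mderiv i (T a)) y * meval n (mderiv j (T b)) y * eta n i j y)
        = (if a + b = n + 1 then 1 else 0))"
proof -
  have n: "n \<ge> 1"
    using assms by simp
  obtain T where T: "\<And>k. is_mpoly n (T k)" "\<And>k y. meval n (T k) y = flat_coord n k y"
    using poly_fun_choice[of n "flat_coord n", OF poly_fun_flat_coord[OF n]] by blast
  obtain t where t: "\<And>k. is_mpoly n (t k)" "\<And>k. homogeneous n (2 * k) (t k)"
      "\<And>k p. meval n (t k) p = flat_coord n k (u_vec n p)"
    using hom_poly_fun_choice[of n "\<lambda>k. 2 * k", OF hom_poly_fun_flat_coord_u_vec[OF n]] by blast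
  obtain S0 where S0: "\<And>k. poly_fun n (S0 k)" "\<forall>y. \<forall>k\<in>{1..n}. S0 k (\<lambda>j. flat_coord n j y) = y k"
      "\<forall>y. \<forall>k\<in>{1..n}. flat_coord n k (\<lambda>j. S0 j y) = y k"
    using triangular_poly_map_inverse[OF poly_fun_flat_coord[OF n] flat_coord_minus_coord_cong[OF assms]]
    by blast
  obtain S where S: "\<And>k. is_mpoly n (S k)" "\<And>k y. meval n (S k) y = S0 k y"
    using poly_fun_choice[of n S0, OF S0(1)] by blast
  have "\<exists>\<alpha>. t k \<alpha> \<noteq> 0" if "k \<in> {1..n}" for k
    using meval_nonzero_imp_coeff_nonzero flat_coord_u_vec_ones_nonzero[OF assms that] t(3) by metis
  moreover have "Bn_invariant n (t k)" for k
    using Bn_invariant_comp_u_vec t(3) by blast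
  ultimately show ?thesis
    using t T S S0(2,3) mderiv_flat_coord_cometric[OF assms T]
    by (intro exI[of _ t] exI[of _ T] exI[of _ S]) simp
qed

end
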